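(* Consider the system model in the context with a line-of-sight-only channel $\mathbf{h}_k=\alpha_k\mathbf{a}(\theta_k)$, where $\alpha_k\in\mathbb{C}\setminus\{0\}$ and $\theta_k\in[0,2\pi)$. For $\phi\in[-\pi,\pi)$ let $\gamma(\alpha_k\mathbf{a}(\phi),\mathbf{F}_k,\mathbf{y}_k)$ be the SINR function defined in the context. Then the function $\phi\mapsto\gamma(\alpha_k\mathbf{a}(\phi),\mathbf{F}_k,\mathbf{y}_k)$ attains its maximum over $[-\pi,\pi)$, and every global maximizer $$\phi^\star\in\arg\max_{\phi\in[-\pi,\pi)}\gamma(\alpha_k\mathbf{a}(\phi),\mathbf{F}_k,\mathbf{y}_k)$$ satisfies $\mathbf{a}(\phi^\star)=\mathbf{a}(\theta_k)$.
   Context: Let $N\ge 2$, $p_{\rm t}>0$, $\sigma^2>0$, and fix $k\in\{1,\dots,N\}$. The array response vector is $\mathbf{a}(\theta)=(1,e^{j\pi\sin\theta},\dots,e^{j\pi(N-1)\sin\theta})^{\mathsf T}\in\mathbb{C}^N$. $\mathbf{U}_N$ is the normalized DFT matrix, $\mathbf{U}_N(a,b)=\frac{1}{\sqrt N}e^{-j2\pi(a-1)(b-1)/N}$; $\mathbf{C}_N(i,k)=((i-k)\bmod N)+1$; and for $k'\in\{1,\dots,N\}$, $\mathbf{F}_{k'}$ is the matrix whose $n$-th column $\mathbf{p}_{[n,k']}$ is the $\mathbf{C}_N(n,k')$-th column of $\mathbf{U}_N$. For $n\in\{1,\dots,N\}$, $\mathbf{P}_n$ is the matrix whose $k'$-th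 column is $\mathbf{p}_{[n,k']}$. A symbol vector $\mathbf{s}\in\mathbb{C}^N$ with $\mathbb{E}[\mathbf{s}\mathbf{s}^{\mathsf H}]=\mathbf{I}_N$ is sent with $\mathbf{x}_n=\frac{1}{\sqrt N}\mathbf{P}_n\mathbf{s}$; device $k$ receives $\mathbf{y}_k=(y_{[1,k]},\dots,y_{[N,k]})^{\mathsf T}$ with $y_{[n,k]}=\sqrt{p_{\rm t}}\mathbf{h}_k^{\mathsf H}\mathbf{x}_n+z_{[n,k]}$, so that $\mathbf{y}_k=\sqrt{p_{\rm t}/N}\sum_{k'=1}^N\mathbf{s}(k')\mathbf{F}_{k'}^{\mathsf T}\mathbf{h}_k^{*}+\mathbf{z}_k$, where $\mathbf{z}_k$ is independent of $\mathbf{s}$, zero mean, with $\mathbb{E}[\mathbf{z}_k\mathbf{z}_k^{\mathsf H}]=\sigma^2\mathbf{I}_N$. For a candidate channel $\mathbf{h}\in\mathbb{C}^N$ with all entries nonzero, let $\tilde{\mathbf{h}}=\mathbf{1}_N\oslash(\mathbf{h}^* )$ (entrywise division), $g(\mathbf{h})=\tilde{\mathbf{h}}^{\mathsf T}\mathbf{F}_k^*\mathbf{F}_k^{\mathsf T}\mathbf{h}_k^*$, $v_{k'}(\mathbf{h})=\tilde{\mathbf{h}}^{\mathsf T}\mathbf{F}_k^*\mathbf{F}_{k'}^{\mathsf T}\mathbf{h}_k^*$, so that the combined signal $\tilde{\mathbf{h}}^{\mathsf T}\mathbf{F}_k^*\mathbf{y}_k=P+I$ with $P=\sqrt{p_{\rm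 t}/N}\,\mathbf{s}(k)g(\mathbf{h})$ and $I=\sqrt{p_{\rm t}/N}\sum_{k'\neq k}\mathbf{s}(k')v_{k'}(\mathbf{h})+\tilde{\mathbf{h}}^{\mathsf T}\mathbf{F}_k^*\mathbf{z}_k$. The SINR is $\gamma(\mathbf{h},\mathbf{F}_k,\mathbf{y}_k)=\mathbb{E}[|P|^2]/\mathbb{E}[|I|^2]$, expectations over $\mathbf{s}$ and $\mathbf{z}_k$. *)

theory Defs
  imports "HOL-Probability.Probability"
begin

text \<open>All indices are 0-based: paper index i in {1..N} corresponds to i-1 in {0..<N}.
 Vectors in C^N are functions nat => complex, only entries below N matter.\<close>

definition arr :: "real \<Rightarrow> nat \<Rightarrow> complex" where
  "arr \<theta> n = exp (\<i> * complex_of_real (pi * real n * sin \<theta>))"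

definition dftU :: "nat \<Rightarrow> nat \<Rightarrow> nat \<Rightarrow> complex" where
  "dftU N a b = exp (- \<i> * complex_of_real (2 * pi * real a * real b / real N))
                 / complex_of_real (sqrt (real N))"

text \<open>C_N(i,k) - 1 in 0-based form: (i - k) mod N.\<close>
definition Cidx :: "nat \<Rightarrow> nat \<Rightarrow> nat \<Rightarrow> nat" where
  "Cidx N i k = nat ((int i - int k) mod int N)"

definition Fmat :: "nat \<Rightarrow> nat \<Rightarrow> nat \<Rightarrow> nat \<Rightarrow> complex" where
  "Fmat N k' a n = dftU N a (Cidx N n k')"

definition htil :: "(nat \<Rightarrow> complex) \<Rightarrow> nat \<Rightarrow> complex" where
  "htil h m = 1 / cnj (h m)"

text \<open>htilde^T F_k^* F_{k'}^T h_k^*; g(h) = comb with k' = k, v_{k'}(h) = comb with k'.\<close>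
definition comb :: "nat \<Rightarrow> nat \<Rightarrow> nat \<Rightarrow> (nat \<Rightarrow> complex) \<Rightarrow> (nat \<Rightarrow> complex) \<Rightarrow> complex" where
  "comb N k k' h hk =
     (\<Sum>m<N. htil h m * (\<Sum>n<N. cnj (Fmat N k m n) * (\<Sum>a<N. Fmat N k' a n * cnj (hk a))))"

definition gfun :: "nat \<Rightarrow> nat \<Rightarrow> (nat \<Rightarrow> complex) \<Rightarrow> (nat \<Rightarrow> complex) \<Rightarrow> complex" where
  "gfun N k h hk = comb N k k h hk"

definition vfun :: "nat \<Rightarrow> nat \<Rightarrow> nat \<Rightarrow> (nat \<Rightarrow> complex) \<Rightarrow> (nat \<Rightarrow> complex) \<Rightarrow> complex" where
  "vfun N k k' h hk = comb N k k' h hk"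

text \<open>Desired-signal term P and interference-plus-noise term I (random variables on the
 sample space), for candidate channel h, true channel hk, symbols s and noise z.\<close>
definition Psig :: "nat \<Rightarrow> real \<Rightarrow> nat \<Rightarrow> (nat \<Rightarrow> complex) \<Rightarrow> (nat \<Rightarrow> complex)
    \<Rightarrow> (nat \<Rightarrow> 'a \<Rightarrow> complex) \<Rightarrow> 'a \<Rightarrow> complex" where
  "Psig N pt k h hk s \<omega> = complex_of_real (sqrt (pt / real N)) * s k \<omega> * gfun N k h hk"

definition Iint :: "nat \<Rightarrow> real \<Rightarrow> nat \<Rightarrow> (nat \<Rightarrow> complex) \<Rightarrow> (nat \<Rightarrow> complex)
    \<Rightarrow> (nat \<Rightarrow> 'a \<Rightarrow> complex) \<Rightarrow> (nat \<Rightarrow> 'a \<Rightarrow> complex) \<Rightarrow> 'a \<Rightarrow> complex" where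
  "Iint N pt k h hk s z \<omega> =
     complex_of_real (sqrt (pt / real N)) * (\<Sum>k'\<in>{..<N} - {k}. s k' \<omega> * vfun N k k' h hk)
     + (\<Sum>m<N. htil h m * (\<Sum>n<N. cnj (Fmat N k m n) * z n \<omega>))"

definition sinr :: "'a measure \<Rightarrow> nat \<Rightarrow> real \<Rightarrow> nat \<Rightarrow> (nat \<Rightarrow> complex) \<Rightarrow> (nat \<Rightarrow> complex)
    \<Rightarrow> (nat \<Rightarrow> 'a \<Rightarrow> complex) \<Rightarrow> (nat \<Rightarrow> 'a \<Rightarrow> complex) \<Rightarrow> real" where
  "sinr M N pt k h hk s z =
     (LINT \<omega>|M. (cmod (Psig N pt k h hk s \<omega>))\<^sup>2) / (LINT \<omega>|M. (cmod (Iint N pt k h hk s z \<omega>))\<^sup>2)"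

end

theory Submission
  imports Defs
begin

text \<open>The columns of F_k and F_k' are cyclic shifts of the same DFT basis, so F_k^* F_k'^T is
  diagonal and each combining coefficient v_k' is the k'-th DFT coefficient of the vector
  c_m = htil_m conj (h_k m); in particular g = (\<Sum>m. c_m). By Parseval, the signal plus
  interference power is N (\<Sum>m. |c_m|^2), and the noise power is \<sigma>^2 (\<Sum>m. |htil_m|^2). For a
  line-of-sight candidate \<alpha> a(\<phi>) every c_m = a_m(\<phi>) conj (a_m(\<theta>)) is unimodular, so the SINR
  is an increasing function of the array gain G = |\<Sum>m. c_m|^2 \<le> N^2. Equality holds iff all c_m
  coincide, i.e. all equal c_0 = 1, i.e. a(\<phi>) = a(\<theta>); it is attained at \<theta> or \<theta> - 2\<pi>.\<close>

definition unit_root :: "nat \<Rightarrow> int \<Rightarrow> complex" where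
  "unit_root N t = exp (complex_of_real (2 * pi * of_int t / real N) * \<i>)"

lemma unit_root_add: "unit_root N (s + t) = unit_root N s * unit_root N t"
  unfolding unit_root_def by (simp add: exp_add[symmetric] distrib_left distrib_right add_divide_distrib)

lemma unit_root_mult_N: "N > 0 \<Longrightarrow> unit_root N (int N * q) = 1"
  unfolding unit_root_def exp_eq_1 by (auto simp: mult_ac intro!: exI[of _ q])

lemma unit_root_cnj: "cnj (unit_root N t) = unit_root N (- t)"
  unfolding unit_root_def exp_cnj by simp

lemma unit_root_mod: "N > 0 \<Longrightarrow> unit_root N (t mod int N) = unit_root N t"
  by (metis unit_root_add unit_root_mult_N mult_div_mod_eq mult_1 add.commute mult.commute)

lemma unit_root_power: "unit_root N (c * int n) = unit_root N c ^ n"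
proof (induction n)
  case (Suc n)
  have "c * int (Suc n) = c * int n + c" by (simp add: algebra_simps)
  then show ?case using Suc by (simp add: unit_root_add mult.commute)
qed (simp add: unit_root_def)

lemma unit_root_eq_1_imp_dvd:
  assumes "N > 0" "unit_root N c = 1"
  shows "int N dvd c"
proof -
  from assms(2) obtain n :: int where "2 * pi * of_int c / real N = of_int (2 * n) * pi"
    unfolding unit_root_def exp_eq_1 by auto
  then have "of_int c = real N * of_int n" using assms(1) by (simp add: field_simps)
  then have "c = int N * n" by (metis of_int_eq_iff of_int_mult of_int_of_nat_eq)
  then show ?thesis by simp
qed

lemma sum_unit_root_powers:
  assumes "N > 0"
  shows "(\<Sum>n<N. unit_root N (c * int n)) = (if int N dvd c then of_nat N else 0)"
proof (cases "int N dvd c")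
  case True
  then show ?thesis using unit_root_mult_N[OF assms] by (auto simp: mult.assoc)
next
  case False
  then have "unit_root N c \<noteq> 1" using unit_root_eq_1_imp_dvd[OF assms] by blast
  moreover have "unit_root N c ^ N = 1"
    using unit_root_power[of N c N] unit_root_mult_N[OF assms, of c] by (simp add: mult.commute)
  ultimately show ?thesis using False geometric_sum[of "unit_root N c" N] by (simp add: unit_root_power)
qed

lemma sum_unit_root_orthogonality:
  assumes "m < N" "l < N"
  shows "(\<Sum>n<N. unit_root N ((int m - int l) * int n)) = (if m = l then of_nat N else 0)"
proof -
  have "int N dvd (int m - int l) \<longleftrightarrow> m = l"
    using assms dvd_imp_le_int[of "int m - int l" "int N"] by (cases "m = l") (auto split: if_splits)
  then show ?thesis using sum_unit_root_powers[of N "int m - int l"] assms by simp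
qed

lemma Fmat_eq_unit_root:
  assumes "N > 0"
  shows "Fmat N k' a n = unit_root N (- (int a * (int n - int k'))) / complex_of_real (sqrt (real N))"
proof -
  have "int (Cidx N n k') = (int n - int k') mod int N"
    unfolding Cidx_def using assms by simp
  moreover have "(- (int a * ((int n - int k') mod int N))) mod int N = (- (int a * (int n - int k'))) mod int N"
    by (metis mod_minus_eq mod_mult_right_eq)
  moreover have "dftU N a b = unit_root N (- (int a * int b)) / complex_of_real (sqrt (real N))" for b
    unfolding dftU_def unit_root_def by (simp add: mult_ac)
  ultimately show ?thesis
    unfolding Fmat_def by (metis unit_root_mod[OF assms])
qed

lemma of_real_sqrt_mult_self_of_nat:
  "complex_of_real (sqrt (real N)) * complex_of_real (sqrt (real N)) = of_nat N"
  unfolding of_real_mult[symmetric] real_sqrt_mult_self by simp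

lemma comb_eq_sum_unit_root:
  assumes "N > 0"
  shows "comb N k k' h hk = (\<Sum>m<N. htil h m * cnj (hk m) * unit_root N (int m * (int k' - int k)))"
proof -
  have entry: "cnj (Fmat N k m n) * (Fmat N k' a n * y) =
      y * unit_root N (int a * int k' - int m * int k) / of_nat N * unit_root N ((int m - int a) * int n)"
    for m n a y
  proof -
    have "cnj (Fmat N k m n) * (Fmat N k' a n * y) =
        y * (unit_root N (int m * (int n - int k)) * unit_root N (- (int a * (int n - int k')))) /
          (complex_of_real (sqrt (real N)) * complex_of_real (sqrt (real N)))"
      unfolding Fmat_eq_unit_root[OF assms] by (simp add: unit_root_cnj)
    also have "unit_root N (int m * (int n - int k)) * unit_root N (- (int a * (int n - int k'))) =
          unit_root N (int a * int k' - int m * int k) * unit_root N ((int m - int a) * int n)"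
      unfolding unit_root_add[symmetric] by (simp add: algebra_simps)
    finally show ?thesis unfolding of_real_sqrt_mult_self_of_nat by simp
  qed
  have "comb N k k' h hk = (\<Sum>m<N. \<Sum>a<N. \<Sum>n<N. htil h m * (cnj (hk a) *
          unit_root N (int a * int k' - int m * int k) / of_nat N) * unit_root N ((int m - int a) * int n))"
    unfolding comb_def by (subst sum.swap) (simp add: sum_distrib_left entry mult.assoc)
  also have "\<dots> = (\<Sum>m<N. \<Sum>a<N. htil h m * (cnj (hk a) *
          unit_root N (int a * int k' - int m * int k) / of_nat N) * (if m = a then of_nat N else 0))"
    by (intro sum.cong refl) (simp only: sum_distrib_left[symmetric] lessThan_iff sum_unit_root_orthogonality)
  also have "\<dots> = (\<Sum>m<N. htil h m * cnj (hk m) * unit_root N (int m * (int k' - int k)))"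
    using assms by (simp add: if_distrib algebra_simps cong: if_cong)
  finally show ?thesis .
qed

lemma sum_norm_square_shifted_dft:
  assumes "N > 0"
  shows "(\<Sum>n<N. (cmod (\<Sum>m<N. b m * unit_root N (int m * (int n - t))))\<^sup>2)
        = real N * (\<Sum>m<N. (cmod (b m))\<^sup>2)"
proof -
  have e: "unit_root N (int m * (int n - t)) * unit_root N (- (int l * (int n - t))) =
      unit_root N ((int l - int m) * t) * unit_root N ((int m - int l) * int n)" for m l n
    unfolding unit_root_add[symmetric] by (simp add: algebra_simps)
  have "complex_of_real (\<Sum>n<N. (cmod (\<Sum>m<N. b m * unit_root N (int m * (int n - t))))\<^sup>2)
     = (\<Sum>n<N. \<Sum>l<N. \<Sum>m<N. b m * cnj (b l) * unit_root N ((int l - int m) * t) *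
          unit_root N ((int m - int l) * int n))"
    unfolding of_real_sum complex_norm_square
    by (simp add: sum_distrib_left sum_distrib_right unit_root_cnj mult_ac e)
  also have "\<dots> = (\<Sum>l<N. \<Sum>m<N. \<Sum>n<N. b m * cnj (b l) * unit_root N ((int l - int m) * t) *
          unit_root N ((int m - int l) * int n))"
    by (subst sum.swap) (intro sum.cong refl sum.swap)
  also have "\<dots> = (\<Sum>l<N. \<Sum>m<N. b m * cnj (b l) * unit_root N ((int l - int m) * t) *
          (if m = l then of_nat N else 0))"
    by (intro sum.cong refl) (simp only: sum_distrib_left[symmetric] lessThan_iff sum_unit_root_orthogonality)
  also have "\<dots> = complex_of_real (real N * (\<Sum>m<N. (cmod (b m))\<^sup>2))"
    unfolding of_real_mult of_real_sum complex_norm_square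
    by (simp add: if_distrib sum_distrib_left mult_ac unit_root_def cong: if_cong)
  finally show ?thesis by (simp only: of_real_eq_iff)
qed

lemma sum_norm_square_comb:
  assumes "N > 0"
  shows "(\<Sum>k'<N. (cmod (comb N k k' h hk))\<^sup>2) = real N * (\<Sum>m<N. (cmod (htil h m * cnj (hk m)))\<^sup>2)"
  using sum_norm_square_shifted_dft[OF assms, of "\<lambda>m. htil h m * cnj (hk m)" "int k"]
  by (simp add: comb_eq_sum_unit_root[OF assms])

lemma sum_norm_square_noise_combiner:
  assumes "N > 0"
  shows "(\<Sum>n<N. (cmod (\<Sum>m<N. htil h m * cnj (Fmat N k m n)))\<^sup>2) = (\<Sum>m<N. (cmod (htil h m))\<^sup>2)"
proof -
  have combiner: "(\<Sum>m<N. htil h m * cnj (Fmat N k m n)) =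
      (\<Sum>m<N. htil h m / complex_of_real (sqrt (real N)) * unit_root N (int m * (int n - int k)))" for n
    unfolding Fmat_eq_unit_root[OF assms] by (simp add: unit_root_cnj algebra_simps)
  show ?thesis
    unfolding combiner sum_norm_square_shifted_dft[OF assms]
    using assms by (simp add: norm_divide power_divide sum_divide_distrib[symmetric])
qed

lemma norm_Psig_square:
  assumes "pt \<ge> 0"
  shows "(cmod (Psig N pt k h hk s \<omega>))\<^sup>2 = pt / real N * (cmod (gfun N k h hk))\<^sup>2 * (cmod (s k \<omega>))\<^sup>2"
  using assms by (simp add: Psig_def norm_mult power_mult_distrib)

lemma Iint_eq_combination:
  "Iint N pt k h hk s z \<omega> =
     (\<Sum>i<N. (if i = k then 0 else complex_of_real (sqrt (pt / real N)) * comb N k i h hk) * s i \<omega>)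
     + (\<Sum>n<N. (\<Sum>m<N. htil h m * cnj (Fmat N k m n)) * z n \<omega>)"
proof -
  have "(\<Sum>i<N. (if i = k then 0 else complex_of_real (sqrt (pt / real N)) * comb N k i h hk) * s i \<omega>)
      = complex_of_real (sqrt (pt / real N)) * (\<Sum>k'\<in>{..<N} - {k}. s k' \<omega> * vfun N k k' h hk)"
    unfolding vfun_def sum_distrib_left by (rule sum.mono_neutral_cong_right) (auto simp: mult_ac)
  moreover have "(\<Sum>m<N. htil h m * (\<Sum>n<N. cnj (Fmat N k m n) * z n \<omega>))
      = (\<Sum>n<N. (\<Sum>m<N. htil h m * cnj (Fmat N k m n)) * z n \<omega>)"
    by (simp add: sum_distrib_left sum_distrib_right mult_ac) (rule sum.swap)
  ultimately show ?thesis by (simp add: Iint_def)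
qed

lemma sum_sum_norm_diff_square:
  fixes c :: "'i \<Rightarrow> complex"
  assumes "finite I"
  shows "(\<Sum>m\<in>I. \<Sum>l\<in>I. (cmod (c m - c l))\<^sup>2)
       = 2 * real (card I) * (\<Sum>m\<in>I. (cmod (c m))\<^sup>2) - 2 * (cmod (\<Sum>m\<in>I. c m))\<^sup>2"
proof -
  have "complex_of_real (\<Sum>m\<in>I. \<Sum>l\<in>I. (cmod (c m - c l))\<^sup>2)
      = (\<Sum>m\<in>I. \<Sum>l\<in>I. c m * cnj (c m) + c l * cnj (c l) - c m * cnj (c l) - c l * cnj (c m))"
    unfolding of_real_sum complex_norm_square by (simp add: algebra_simps)
  also have "\<dots> = 2 * of_nat (card I) * (\<Sum>m\<in>I. c m * cnj (c m)) - 2 * ((\<Sum>m\<in>I. c m) * cnj (\<Sum>m\<in>I. c m))"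
    by (simp add: sum_subtractf sum.distrib sum_product cnj_sum sum_distrib_left[symmetric]
        sum.swap[of _ I I] mult.commute)
  also have "\<dots> = complex_of_real
      (2 * real (card I) * (\<Sum>m\<in>I. (cmod (c m))\<^sup>2) - 2 * (cmod (\<Sum>m\<in>I. c m))\<^sup>2)"
    unfolding of_real_diff of_real_mult of_real_sum complex_norm_square by simp
  finally show ?thesis by (simp only: of_real_eq_iff)
qed

lemma eq_if_norm_sum_eq_card:
  fixes c :: "'i \<Rightarrow> complex"
  assumes "finite I" "\<And>m. m \<in> I \<Longrightarrow> cmod (c m) = 1" "cmod (\<Sum>m\<in>I. c m) = real (card I)"
    and "m \<in> I" "l \<in> I"
  shows "c m = c l"
proof -
  have "(\<Sum>m\<in>I. (cmod (c m))\<^sup>2) = real (card I)"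
    using assms(2) by simp
  then have "(\<Sum>m\<in>I. \<Sum>l\<in>I. (cmod (c m - c l))\<^sup>2) = 0"
    using sum_sum_norm_diff_square[OF assms(1), of c] assms(3) by (simp add: power2_eq_square)
  then have "(\<Sum>l\<in>I. (cmod (c m - c l))\<^sup>2) = 0"
    using assms(1,4) sum_nonneg_eq_0_iff[of I "\<lambda>m. \<Sum>l\<in>I. (cmod (c m - c l))\<^sup>2"]
    by (simp add: sum_nonneg)
  then have "(cmod (c m - c l))\<^sup>2 = 0"
    using assms(1,5) by (simp add: sum_nonneg_eq_0_iff)
  then show ?thesis by simp
qed

lemma divide_affine_le_divide_affine_iff:
  fixes a b T x y :: real
  assumes "a > 0" "b > 0" "T \<ge> 0" "x \<le> T" "y \<le> T"
  shows "a * x / (a * (T - x) + b) \<le> a * y / (a * (T - y) + b) \<longleftrightarrow> x \<le> y"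
proof -
  have "a * (T - x) + b > 0" "a * (T - y) + b > 0"
    using assms by (simp_all add: add_nonneg_pos)
  then have "a * x / (a * (T - x) + b) \<le> a * y / (a * (T - y) + b)
      \<longleftrightarrow> a * x * (a * (T - y) + b) \<le> a * y * (a * (T - x) + b)"
    by (simp add: field_simps)
  also have "\<dots> \<longleftrightarrow> 0 \<le> a * (a * T + b) * (y - x)"
    by (simp add: algebra_simps)
  also have "\<dots> \<longleftrightarrow> x \<le> y"
  proof -
    have "0 < a * (a * T + b)" using assms by (simp add: add_nonneg_pos)
    from mult_le_cancel_left_pos[OF this, of 0 "y - x"] show ?thesis by simp
  qed
  finally show ?thesis .
qed

lemma norm_arr [simp]: "cmod (arr \<theta> n) = 1"
  unfolding arr_def by simp

lemma arr_mult_cnj_self [simp]: "arr \<theta> n * cnj (arr \<theta> n) = 1"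
  using complex_norm_square[of "arr \<theta> n"] by simp

lemma arr_0 [simp]: "arr \<theta> 0 = 1"
  unfolding arr_def by simp

definition array_gain :: "nat \<Rightarrow> real \<Rightarrow> real \<Rightarrow> real" where
  "array_gain N \<theta> \<phi> = (cmod (\<Sum>m<N. arr \<phi> m * cnj (arr \<theta> m)))\<^sup>2"

lemma array_gain_le: "array_gain N \<theta> \<phi> \<le> real N * real N"
proof -
  have "cmod (\<Sum>m<N. arr \<phi> m * cnj (arr \<theta> m)) \<le> real N"
    using norm_sum[of "\<lambda>m. arr \<phi> m * cnj (arr \<theta> m)" "{..<N}"] by (simp add: norm_mult)
  then show ?thesis
    unfolding array_gain_def power2_eq_square by (simp add: mult_mono')
qed

lemma array_gain_eq_square_iff:
  assumes "N > 0"
  shows "array_gain N \<theta> \<phi> = real N * real N \<longleftrightarrow> (\<forall>n<N. arr \<phi> n = arr \<theta> n)"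
proof
  assume gain: "array_gain N \<theta> \<phi> = real N * real N"
  show "\<forall>n<N. arr \<phi> n = arr \<theta> n"
  proof (intro allI impI)
    fix n assume "n < N"
    have "cmod (\<Sum>m<N. arr \<phi> m * cnj (arr \<theta> m)) = real N"
      using gain power2_eq_iff_nonneg[of "cmod (\<Sum>m<N. arr \<phi> m * cnj (arr \<theta> m))" "real N"]
      unfolding array_gain_def by (simp add: power2_eq_square)
    then have "arr \<phi> n * cnj (arr \<theta> n) = arr \<phi> 0 * cnj (arr \<theta> 0)"
      using \<open>n < N\<close> assms
      by (intro eq_if_norm_sum_eq_card[where I = "{..<N}"]) (simp_all add: norm_mult)
    then have "arr \<phi> n * cnj (arr \<theta> n) * arr \<theta> n = arr \<theta> n"
      by simp
    then show "arr \<phi> n = arr \<theta> n"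
      by (simp add: mult.assoc mult.commute[of "cnj (arr \<theta> n)"])
  qed
next
  assume "\<forall>n<N. arr \<phi> n = arr \<theta> n"
  then have "(\<Sum>m<N. arr \<phi> m * cnj (arr \<theta> m)) = of_nat N"
    by simp
  then show "array_gain N \<theta> \<phi> = real N * real N"
    by (simp add: array_gain_def power2_eq_square)
qed

lemma htil_line_of_sight:
  assumes "\<alpha> \<noteq> 0"
  shows "htil (\<lambda>n. \<alpha> * arr \<phi> n) m * cnj (\<alpha> * arr \<theta> m) = arr \<phi> m * cnj (arr \<theta> m)"
    and "cmod (htil (\<lambda>n. \<alpha> * arr \<phi> n) m) = 1 / cmod \<alpha>"
proof -
  have "cnj (arr \<phi> m) \<noteq> 0"
    using norm_arr[of \<phi> m] by (auto simp del: norm_arr)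
  then show "htil (\<lambda>n. \<alpha> * arr \<phi> n) m * cnj (\<alpha> * arr \<theta> m) = arr \<phi> m * cnj (arr \<theta> m)"
    using assms unfolding htil_def by (simp add: field_simps)
  show "cmod (htil (\<lambda>n. \<alpha> * arr \<phi> n) m) = 1 / cmod \<alpha>"
    unfolding htil_def by (simp add: norm_divide norm_mult)
qed

lemma gfun_line_of_sight:
  assumes "N > 0" "\<alpha> \<noteq> 0"
  shows "gfun N k (\<lambda>n. \<alpha> * arr \<phi> n) (\<lambda>n. \<alpha> * arr \<theta> n) = (\<Sum>m<N. arr \<phi> m * cnj (arr \<theta> m))"
  unfolding gfun_def comb_eq_sum_unit_root[OF assms(1)] htil_line_of_sight[OF assms(2)]
  by (simp add: unit_root_def)

lemma measurable_cnj [measurable]: "cnj \<in> borel_measurable borel"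
  by (intro borel_measurable_continuous_onI continuous_intros)

lemma integrable_mult_cnj_of_square_integrable:
  fixes f g :: "'a \<Rightarrow> complex"
  assumes "f \<in> borel_measurable M" "g \<in> borel_measurable M"
    and "integrable M (\<lambda>\<omega>. (cmod (f \<omega>))\<^sup>2)" "integrable M (\<lambda>\<omega>. (cmod (g \<omega>))\<^sup>2)"
  shows "integrable M (\<lambda>\<omega>. f \<omega> * cnj (g \<omega>))"
proof (rule Bochner_Integration.integrable_bound)
  show "integrable M (\<lambda>\<omega>. (cmod (f \<omega>))\<^sup>2 + (cmod (g \<omega>))\<^sup>2)" using assms by auto
  show "(\<lambda>\<omega>. f \<omega> * cnj (g \<omega>)) \<in> borel_measurable M" using assms by measurable
  have "cmod (f x) * cmod (g x) \<le> (cmod (f x))\<^sup>2 + (cmod (g x))\<^sup>2" for x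
  proof -
    have "0 \<le> cmod (f x) * cmod (g x)" by simp
    then show ?thesis using sum_squares_bound[of "cmod (f x)" "cmod (g x)"] by linarith
  qed
  then show "AE x in M. norm (f x * cnj (g x)) \<le> norm ((cmod (f x))\<^sup>2 + (cmod (g x))\<^sup>2)"
    by (simp add: norm_mult)
qed

lemma (in prob_space) integrable_of_square_integrable:
  fixes f :: "'a \<Rightarrow> complex"
  assumes "f \<in> borel_measurable M" "integrable M (\<lambda>\<omega>. (cmod (f \<omega>))\<^sup>2)"
  shows "integrable M f"
  using integrable_mult_cnj_of_square_integrable[of f M "\<lambda>_. 1"] assms by simp

lemma second_moment_uncorrelated_sum:
  fixes W :: "'i \<Rightarrow> 'a \<Rightarrow> complex" and d :: "'i \<Rightarrow> real"
  assumes "finite I"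
    and "\<And>i. i \<in> I \<Longrightarrow> W i \<in> borel_measurable M"
    and "\<And>i. i \<in> I \<Longrightarrow> integrable M (\<lambda>\<omega>. (cmod (W i \<omega>))\<^sup>2)"
    and "\<And>i j. i \<in> I \<Longrightarrow> j \<in> I \<Longrightarrow>
           (LINT \<omega>|M. W i \<omega> * cnj (W j \<omega>)) = (if i = j then complex_of_real (d i) else 0)"
  shows "(LINT \<omega>|M. (cmod (\<Sum>i\<in>I. a i * W i \<omega>))\<^sup>2) = (\<Sum>i\<in>I. (cmod (a i))\<^sup>2 * d i)"
proof -
  have "complex_of_real (LINT \<omega>|M. (cmod (\<Sum>i\<in>I. a i * W i \<omega>))\<^sup>2) =
        (LINT \<omega>|M. (\<Sum>i\<in>I. \<Sum>j\<in>I. a i * cnj (a j) * (W i \<omega> * cnj (W j \<omega>))))"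
    unfolding integral_complex_of_real[symmetric] complex_norm_square
    by (simp add: cnj_sum sum_product mult_ac)
  also have "\<dots> = (\<Sum>i\<in>I. \<Sum>j\<in>I. a i * cnj (a j) * (LINT \<omega>|M. W i \<omega> * cnj (W j \<omega>)))"
    using assms(2,3) integrable_mult_cnj_of_square_integrable[of "W _" M "W _"]
    by (simp add: Bochner_Integration.integral_sum)
  also have "\<dots> = (\<Sum>i\<in>I. \<Sum>j\<in>I. if i = j then a i * cnj (a j) * complex_of_real (d i) else 0)"
    using assms(4) by (intro sum.cong refl) auto
  also have "\<dots> = complex_of_real (\<Sum>i\<in>I. (cmod (a i))\<^sup>2 * d i)"
    unfolding of_real_sum of_real_mult complex_norm_square using assms(1) by (simp add: sum.delta')
  finally show ?thesis by (simp only: of_real_eq_iff)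
qed

locale symbols_and_noise = prob_space M
  for M :: "'a measure" and N :: nat and \<sigma>2 :: real and s z :: "nat \<Rightarrow> 'a \<Rightarrow> complex" +
  assumes measurable: "\<forall>i<N. s i \<in> borel_measurable M \<and> z i \<in> borel_measurable M"
    and square_integrable:
      "\<forall>i<N. integrable M (\<lambda>\<omega>. (cmod (s i \<omega>))\<^sup>2) \<and> integrable M (\<lambda>\<omega>. (cmod (z i \<omega>))\<^sup>2)"
    and symbols_orthonormal:
      "\<forall>i<N. \<forall>j<N. (LINT \<omega>|M. s i \<omega> * cnj (s j \<omega>)) = (if i = j then 1 else 0)"
    and noise_mean: "\<forall>i<N. (LINT \<omega>|M. z i \<omega>) = 0"
    and noise_covariance:
      "\<forall>i<N. \<forall>j<N. (LINT \<omega>|M. z i \<omega> * cnj (z j \<omega>)) = (if i = j then complex_of_real \<sigma>2 else 0)"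
    and symbols_noise_indep:
      "indep_var (PiM {..<N} (\<lambda>_. borel :: complex measure)) (\<lambda>\<omega>. restrict (\<lambda>i. s i \<omega>) {..<N})
                 (PiM {..<N} (\<lambda>_. borel :: complex measure)) (\<lambda>\<omega>. restrict (\<lambda>i. z i \<omega>) {..<N})"
begin

lemma symbol_noise_cross_moment:
  assumes "i < N" "j < N"
  shows "(LINT \<omega>|M. s i \<omega> * cnj (z j \<omega>)) = 0"
proof -
  have "(\<lambda>x. x i) \<in> measurable (PiM {..<N} (\<lambda>_. borel :: complex measure)) borel"
    and "(\<lambda>x. cnj (x j)) \<in> measurable (PiM {..<N} (\<lambda>_. borel :: complex measure)) borel"
    using assms measurable_compose[OF measurable_component_singleton[of j] measurable_cnj] by auto
  from indep_var_compose[OF symbols_noise_indep this]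
  have "indep_var borel (s i) borel (\<lambda>\<omega>. cnj (z j \<omega>))"
    using assms by (simp add: comp_def)
  moreover have "integrable M (s i)" "integrable M (z j)"
    using assms measurable square_integrable integrable_of_square_integrable by blast+
  ultimately have "(LINT \<omega>|M. s i \<omega> * cnj (z j \<omega>)) = (LINT \<omega>|M. s i \<omega>) * cnj (LINT \<omega>|M. z j \<omega>)"
    by (simp add: indep_var_lebesgue_integral integrable_cnj)
  then show ?thesis using noise_mean assms by simp
qed

lemma second_moment_symbols_plus_noise:
  "(LINT \<omega>|M. (cmod ((\<Sum>i<N. a i * s i \<omega>) + (\<Sum>n<N. b n * z n \<omega>)))\<^sup>2)
     = (\<Sum>i<N. (cmod (a i))\<^sup>2) + \<sigma>2 * (\<Sum>n<N. (cmod (b n))\<^sup>2)"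
proof -
  \<comment> \<open>Symbols and noise form one uncorrelated family indexed by \<open>nat + nat\<close>.\<close>
  define W where "W = case_sum s z"
  define d :: "nat + nat \<Rightarrow> real" where "d = case_sum (\<lambda>_. 1) (\<lambda>_. \<sigma>2)"
  define J where "J = {..<N} <+> {..<N}"
  have cov: "(LINT \<omega>|M. W x \<omega> * cnj (W y \<omega>)) = (if x = y then complex_of_real (d x) else 0)"
    if "x \<in> J" "y \<in> J" for x y
  proof -
    have "(LINT \<omega>|M. z j \<omega> * cnj (s i \<omega>)) = cnj (LINT \<omega>|M. s i \<omega> * cnj (z j \<omega>))" for i j
      by (subst Bochner_Integration.integral_cnj[symmetric]) (simp add: mult.commute)
    then show ?thesis
      using that symbols_orthonormal noise_covariance symbol_noise_cross_moment
      by (cases x; cases y) (auto simp: J_def W_def d_def)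
  qed
  have "(\<Sum>i<N. a i * s i \<omega>) + (\<Sum>n<N. b n * z n \<omega>) = (\<Sum>x\<in>J. case_sum a b x * W x \<omega>)" for \<omega>
    by (simp add: J_def W_def sum.Plus)
  moreover have "(\<Sum>x\<in>J. (cmod (case_sum a b x))\<^sup>2 * d x)
      = (\<Sum>i<N. (cmod (a i))\<^sup>2) + \<sigma>2 * (\<Sum>n<N. (cmod (b n))\<^sup>2)"
    by (simp add: J_def d_def sum.Plus sum_distrib_left mult.commute)
  moreover have "(LINT \<omega>|M. (cmod (\<Sum>x\<in>J. case_sum a b x * W x \<omega>))\<^sup>2)
      = (\<Sum>x\<in>J. (cmod (case_sum a b x))\<^sup>2 * d x)"
    by (rule second_moment_uncorrelated_sum)
       (use cov measurable square_integrable in \<open>auto simp: J_def W_def\<close>)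
  ultimately show ?thesis by simp
qed

lemma symbol_second_moment:
  assumes "i < N"
  shows "(LINT \<omega>|M. (cmod (s i \<omega>))\<^sup>2) = 1"
proof -
  have "complex_of_real (LINT \<omega>|M. (cmod (s i \<omega>))\<^sup>2) = (LINT \<omega>|M. s i \<omega> * cnj (s i \<omega>))"
    unfolding integral_complex_of_real[symmetric] complex_norm_square ..
  then show ?thesis using symbols_orthonormal assms by simp
qed

lemma sinr_eq:
  assumes "k < N" "pt > 0"
  shows "sinr M N pt k h hk s z =
    pt / real N * (cmod (gfun N k h hk))\<^sup>2 /
    (pt / real N * (real N * (\<Sum>m<N. (cmod (htil h m * cnj (hk m)))\<^sup>2) - (cmod (gfun N k h hk))\<^sup>2)
     + \<sigma>2 * (\<Sum>m<N. (cmod (htil h m))\<^sup>2))"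
proof -
  have N: "N > 0" using assms(1) by simp
  have num: "(LINT \<omega>|M. (cmod (Psig N pt k h hk s \<omega>))\<^sup>2) = pt / real N * (cmod (gfun N k h hk))\<^sup>2"
    using assms by (simp add: norm_Psig_square symbol_second_moment)
  have "(\<Sum>i<N. (cmod (if i = k then 0 else complex_of_real (sqrt (pt / real N)) * comb N k i h hk))\<^sup>2)
      = pt / real N * ((\<Sum>i<N. (cmod (comb N k i h hk))\<^sup>2) - (cmod (gfun N k h hk))\<^sup>2)"
  proof -
    have "(\<Sum>i<N. (cmod (if i = k then 0 else complex_of_real (sqrt (pt / real N)) * comb N k i h hk))\<^sup>2)
        = (\<Sum>i\<in>{..<N} - {k}. pt / real N * (cmod (comb N k i h hk))\<^sup>2)"
      using assms by (intro sum.mono_neutral_cong_right) (auto simp: norm_mult power_mult_distrib)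
    then show ?thesis
      using assms by (simp add: sum_diff1 gfun_def sum_distrib_left sum_divide_distrib right_diff_distrib)
  qed
  then have den: "(LINT \<omega>|M. (cmod (Iint N pt k h hk s z \<omega>))\<^sup>2)
      = pt / real N * (real N * (\<Sum>m<N. (cmod (htil h m * cnj (hk m)))\<^sup>2) - (cmod (gfun N k h hk))\<^sup>2)
        + \<sigma>2 * (\<Sum>m<N. (cmod (htil h m))\<^sup>2)"
    by (simp add: Iint_eq_combination second_moment_symbols_plus_noise
        sum_norm_square_comb[OF N] sum_norm_square_noise_combiner[OF N])
  show ?thesis unfolding sinr_def num den ..
qed

lemma sinr_line_of_sight:
  assumes "k < N" "pt > 0" "\<alpha> \<noteq> 0"
  shows "sinr M N pt k (\<lambda>n. \<alpha> * arr \<phi> n) (\<lambda>n. \<alpha> * arr \<theta> n) s z =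
    pt / real N * array_gain N \<theta> \<phi> /
    (pt / real N * (real N * real N - array_gain N \<theta> \<phi>) + \<sigma>2 * (real N / (cmod \<alpha>)\<^sup>2))"
proof -
  have N: "N > 0" using assms(1) by simp
  show ?thesis
    unfolding sinr_eq[OF assms(1,2)] gfun_line_of_sight[OF N assms(3)] htil_line_of_sight[OF assms(3)]
      array_gain_def
    by (simp add: norm_mult power_one_over divide_inverse power_inverse)
qed

lemma sinr_line_of_sight_le_iff:
  assumes "k < N" "pt > 0" "\<sigma>2 > 0" "\<alpha> \<noteq> 0"
  shows "sinr M N pt k (\<lambda>n. \<alpha> * arr \<psi> n) (\<lambda>n. \<alpha> * arr \<theta> n) s z
           \<le> sinr M N pt k (\<lambda>n. \<alpha> * arr \<phi> n) (\<lambda>n. \<alpha> * arr \<theta> n) s z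
         \<longleftrightarrow> array_gain N \<theta> \<psi> \<le> array_gain N \<theta> \<phi>"
proof -
  have "0 < pt / real N" "0 < \<sigma>2 * (real N / (cmod \<alpha>)\<^sup>2)"
    using assms by simp_all
  then show ?thesis
    unfolding sinr_line_of_sight[OF assms(1,2,4)]
    by (rule divide_affine_le_divide_affine_iff) (simp_all add: array_gain_le)
qed

end

theorem lemma3:
  fixes M :: "'a measure" and N k :: nat and pt \<sigma>2 \<theta> :: real and \<alpha> :: complex
    and s z :: "nat \<Rightarrow> 'a \<Rightarrow> complex"
  assumes "N \<ge> 2" and "k < N" and "pt > 0" and "\<sigma>2 > 0"
    and "\<alpha> \<noteq> 0" and "\<theta> \<in> {0..<2 * pi}"
    and "prob_space M"
    and "\<forall>i<N. s i \<in> borel_measurable M \<and> z i \<in> borel_measurable M"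
    and "\<forall>i<N. integrable M (\<lambda>\<omega>. (cmod (s i \<omega>))\<^sup>2) \<and> integrable M (\<lambda>\<omega>. (cmod (z i \<omega>))\<^sup>2)"
    and "\<forall>i<N. \<forall>j<N. (LINT \<omega>|M. s i \<omega> * cnj (s j \<omega>)) = (if i = j then 1 else 0)"
    and "\<forall>i<N. (LINT \<omega>|M. z i \<omega>) = 0"
    and "\<forall>i<N. \<forall>j<N. (LINT \<omega>|M. z i \<omega> * cnj (z j \<omega>)) = (if i = j then complex_of_real \<sigma>2 else 0)"
    and "prob_space.indep_var M
           (PiM {..<N} (\<lambda>_. borel :: complex measure)) (\<lambda>\<omega>. restrict (\<lambda>i. s i \<omega>) {..<N})
           (PiM {..<N} (\<lambda>_. borel :: complex measure)) (\<lambda>\<omega>. restrict (\<lambda>i. z i \<omega>) {..<N})"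
  shows "(\<exists>\<phi>\<in>{-pi..<pi}. \<forall>\<psi>\<in>{-pi..<pi}.
            sinr M N pt k (\<lambda>n. \<alpha> * arr \<psi> n) (\<lambda>n. \<alpha> * arr \<theta> n) s z
            \<le> sinr M N pt k (\<lambda>n. \<alpha> * arr \<phi> n) (\<lambda>n. \<alpha> * arr \<theta> n) s z)
       \<and> (\<forall>\<phi>\<in>{-pi..<pi}.
            (\<forall>\<psi>\<in>{-pi..<pi}.
               sinr M N pt k (\<lambda>n. \<alpha> * arr \<psi> n) (\<lambda>n. \<alpha> * arr \<theta> n) s z
               \<le> sinr M N pt k (\<lambda>n. \<alpha> * arr \<phi> n) (\<lambda>n. \<alpha> * arr \<theta> n) s z)
            \<longrightarrow> (\<forall>n<N. arr \<phi> n = arr \<theta> n))"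
proof -
  interpret symbols_and_noise M N \<sigma>2 s z
    by (intro symbols_and_noise.intro symbols_and_noise_axioms.intro) (fact assms)+
  note sinr_le_iff = sinr_line_of_sight_le_iff[OF assms(2-5)]
  have N: "N > 0" using assms(1) by simp
  \<comment> \<open>\<open>\<theta>\<close> itself may lie outside \<open>[-\<pi>, \<pi>)\<close>.\<close>
  define \<phi>\<^sub>0 where "\<phi>\<^sub>0 = (if \<theta> < pi then \<theta> else \<theta> - 2 * pi)"
  have \<phi>\<^sub>0_range: "\<phi>\<^sub>0 \<in> {-pi..<pi}" using assms(6) by (auto simp: \<phi>\<^sub>0_def)
  have "arr \<phi>\<^sub>0 n = arr \<theta> n" for n
    by (simp add: \<phi>\<^sub>0_def arr_def sin_diff)
  then have gain_\<phi>\<^sub>0: "array_gain N \<theta> \<phi>\<^sub>0 = real N * real N"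
    using array_gain_eq_square_iff[OF N] by blast
  show ?thesis
  proof (intro conjI ballI impI allI)
    show "\<exists>\<phi>\<in>{-pi..<pi}. \<forall>\<psi>\<in>{-pi..<pi}.
        sinr M N pt k (\<lambda>n. \<alpha> * arr \<psi> n) (\<lambda>n. \<alpha> * arr \<theta> n) s z
        \<le> sinr M N pt k (\<lambda>n. \<alpha> * arr \<phi> n) (\<lambda>n. \<alpha> * arr \<theta> n) s z"
      using \<phi>\<^sub>0_range by (intro bexI[of _ \<phi>\<^sub>0]) (simp_all add: sinr_le_iff gain_\<phi>\<^sub>0 array_gain_le)
  next
    fix \<phi> n
    assume "\<phi> \<in> {-pi..<pi}" "n < N"
      and "\<forall>\<psi>\<in>{-pi..<pi}. sinr M N pt k (\<lambda>n. \<alpha> * arr \<psi> n) (\<lambda>n. \<alpha> * arr \<theta> n) s z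
             \<le> sinr M N pt k (\<lambda>n. \<alpha> * arr \<phi> n) (\<lambda>n. \<alpha> * arr \<theta> n) s z"
    then have "array_gain N \<theta> \<phi>\<^sub>0 \<le> array_gain N \<theta> \<phi>"
      using \<phi>\<^sub>0_range sinr_le_iff by blast
    then have "array_gain N \<theta> \<phi> = real N * real N"
      using array_gain_le[of N \<theta> \<phi>] gain_\<phi>\<^sub>0 by linarith
    then show "arr \<phi> n = arr \<theta> n"
      using array_gain_eq_square_iff[OF N] \<open>n < N\<close> by blast
  qed
qed

end
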